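(* The categories $\sigma\ell\mathbb{G}$ and $\mathcal{V}_{\sigma\ell\mathbb{G}}$ are isomorphic. More precisely: (i) for every $G\in\mathcal{V}_{\sigma\ell\mathbb{G}}$, the reduct of $G$ to the $\ell$-group operations is a Dedekind $\sigma$-complete $\ell$-group, and every morphism of $\mathcal{V}_{\sigma\ell\mathbb{G}}$ is a $\sigma$-continuous $\ell$-morphism between these reducts; (ii) for every Dedekind $\sigma$-complete $\ell$-group $G$, setting $\bigvee^-(g,f_1,f_2,\dots):=\sup_{n\ge1}\{f_n\wedge g\}$ makes $G$ an object of $\mathcal{V}_{\sigma\ell\mathbb{G}}$, and every $\sigma$-continuous $\ell$-morphism is a morphism of $\mathcal{V}_{\sigma\ell\mathbb{G}}$ for these structures; (iii) the functor $U\colon\mathcal{V}_{\sigma\ell\mathbb{G}}\to\sigma\ell\mathbb{G}$ (forget $\bigvee^-$, identity on maps) and the functor $F\colon\sigma\ell\mathbb{G}\to\mathcal{V}_{\sigma\ell\mathbb{G}}$ (add $\bigvee^-$ as in (ii), identity on maps) are mutually inverse. In particular the category of Dedekind $\sigma$-complete $\ell$-groups is an infinitary variety.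
   Context: An $\ell$-group is Dedekind $\sigma$-complete if every countable subset with an upper bound has a least upper bound. An $\ell$-morphism is $\sigma$-continuous if it preserves all existing suprema of countable families. $\sigma\ell\mathbb{G}$ is the category of Dedekind $\sigma$-complete $\ell$-groups with $\sigma$-continuous $\ell$-morphisms. $\mathcal{V}_{\sigma\ell\mathbb{G}}$ is the infinitary variety of algebras $(G,0,+,-,\vee,\wedge,\bigvee^-)$ where $\bigvee^-$ has countably infinite arity, writing $\bigvee_{n\ge1}^g f_n:=\bigvee^-(g,f_1,f_2,\dots)$, satisfying the $\ell$-group axioms and the equations (A1) $\bigvee_{n\ge1}^g f_n=\bigvee_{n\ge1}^g(f_n\wedge g)$; (A2) $\bigvee_{n\ge1}^g f_n=(f_1\wedge g)\vee\bigvee_{n\ge2}^g f_n$ (where $\bigvee_{n\ge2}^g f_n:=\bigvee^-(g,f_2,f_3,\dots)$); (A3) $\bigvee_{n\ge1}^g(f_n\wedge h)\le h$ (an inequality $a\le b$ meaning the equation $a\wedge b=a$). Morphisms of $\mathcal{V}_{\sigma\ell\mathbb{G}}$ are maps preserving all these operations. *)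

theory Defs
  imports Main
begin

record 'a lgrp =
  carrier :: "'a set"
  zero :: 'a
  add :: "'a \<Rightarrow> 'a \<Rightarrow> 'a"
  neg :: "'a \<Rightarrow> 'a"
  join :: "'a \<Rightarrow> 'a \<Rightarrow> 'a"
  meet :: "'a \<Rightarrow> 'a \<Rightarrow> 'a"

text \<open>Algebras of the infinitary signature: l-group operations plus the
  countably-infinitary operation vsup g f = V^-(g, f 1, f 2, ...), where
  the sequence f_1, f_2, ... is represented as f 0, f 1, ...\<close>
record 'a vsl = "'a lgrp" +
  vsup :: "'a \<Rightarrow> (nat \<Rightarrow> 'a) \<Rightarrow> 'a"

definition lgroup :: "('a, 'm) lgrp_scheme \<Rightarrow> bool" where
  "lgroup G \<longleftrightarrow>
     zero G \<in> carrier G \<and>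
     (\<forall>a\<in>carrier G. \<forall>b\<in>carrier G. add G a b \<in> carrier G \<and> join G a b \<in> carrier G \<and> meet G a b \<in> carrier G) \<and>
     (\<forall>a\<in>carrier G. neg G a \<in> carrier G) \<and>
     (\<forall>a\<in>carrier G. \<forall>b\<in>carrier G. \<forall>c\<in>carrier G. add G (add G a b) c = add G a (add G b c)) \<and>
     (\<forall>a\<in>carrier G. add G (zero G) a = a \<and> add G a (zero G) = a) \<and>
     (\<forall>a\<in>carrier G. add G (neg G a) a = zero G \<and> add G a (neg G a) = zero G) \<and>
     (\<forall>a\<in>carrier G. \<forall>b\<in>carrier G. join G a b = join G b a \<and> meet G a b = meet G b a) \<and>
     (\<forall>a\<in>carrier G. \<forall>b\<in>carrier G. \<forall>c\<in>carrier G.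
        join G (join G a b) c = join G a (join G b c) \<and> meet G (meet G a b) c = meet G a (meet G b c)) \<and>
     (\<forall>a\<in>carrier G. \<forall>b\<in>carrier G. join G a (meet G a b) = a \<and> meet G a (join G a b) = a) \<and>
     (\<forall>a\<in>carrier G. \<forall>b\<in>carrier G. \<forall>c\<in>carrier G.
        add G a (join G b c) = join G (add G a b) (add G a c) \<and>
        add G (join G b c) a = join G (add G b a) (add G c a))"

definition lle :: "('a, 'm) lgrp_scheme \<Rightarrow> 'a \<Rightarrow> 'a \<Rightarrow> bool" where
  "lle G a b \<longleftrightarrow> meet G a b = a"

definition is_ub :: "('a, 'm) lgrp_scheme \<Rightarrow> 'a set \<Rightarrow> 'a \<Rightarrow> bool" where
  "is_ub G A u \<longleftrightarrow> u \<in> carrier G \<and> (\<forall>a\<in>A. lle G a u)"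

definition is_lub :: "('a, 'm) lgrp_scheme \<Rightarrow> 'a set \<Rightarrow> 'a \<Rightarrow> bool" where
  "is_lub G A s \<longleftrightarrow> is_ub G A s \<and> (\<forall>u. is_ub G A u \<longrightarrow> lle G s u)"

definition sigma_complete :: "('a, 'm) lgrp_scheme \<Rightarrow> bool" where
  "sigma_complete G \<longleftrightarrow> lgroup G \<and>
     (\<forall>f :: nat \<Rightarrow> 'a. range f \<subseteq> carrier G \<and> (\<exists>u. is_ub G (range f) u)
        \<longrightarrow> (\<exists>s. is_lub G (range f) s))"

definition l_morphism :: "('a, 'm) lgrp_scheme \<Rightarrow> ('b, 'n) lgrp_scheme \<Rightarrow> ('a \<Rightarrow> 'b) \<Rightarrow> bool" where
  "l_morphism G H h \<longleftrightarrow>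
     (\<forall>a\<in>carrier G. h a \<in> carrier H) \<and>
     h (zero G) = zero H \<and>
     (\<forall>a\<in>carrier G. h (neg G a) = neg H (h a)) \<and>
     (\<forall>a\<in>carrier G. \<forall>b\<in>carrier G.
        h (add G a b) = add H (h a) (h b) \<and>
        h (join G a b) = join H (h a) (h b) \<and>
        h (meet G a b) = meet H (h a) (h b))"

definition sigma_continuous :: "('a, 'm) lgrp_scheme \<Rightarrow> ('b, 'n) lgrp_scheme \<Rightarrow> ('a \<Rightarrow> 'b) \<Rightarrow> bool" where
  "sigma_continuous G H h \<longleftrightarrow> l_morphism G H h \<and>
     (\<forall>(f :: nat \<Rightarrow> 'a) s. range f \<subseteq> carrier G \<and> is_lub G (range f) s
        \<longrightarrow> is_lub H (range (h \<circ> f)) (h s))"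

definition in_variety :: "('a, 'm) vsl_scheme \<Rightarrow> bool" where
  "in_variety V \<longleftrightarrow> lgroup V \<and>
     (\<forall>g\<in>carrier V. \<forall>f. range f \<subseteq> carrier V \<longrightarrow> vsup V g f \<in> carrier V) \<and>
     (\<forall>g\<in>carrier V. \<forall>f. range f \<subseteq> carrier V \<longrightarrow>
        vsup V g f = vsup V g (\<lambda>n. meet V (f n) g)) \<and>
     (\<forall>g\<in>carrier V. \<forall>f. range f \<subseteq> carrier V \<longrightarrow>
        vsup V g f = join V (meet V (f 0) g) (vsup V g (\<lambda>n. f (Suc n)))) \<and>
     (\<forall>g\<in>carrier V. \<forall>h\<in>carrier V. \<forall>f. range f \<subseteq> carrier V \<longrightarrow>
        lle V (vsup V g (\<lambda>n. meet V (f n) h)) h)"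

definition v_morphism :: "('a, 'm) vsl_scheme \<Rightarrow> ('b, 'n) vsl_scheme \<Rightarrow> ('a \<Rightarrow> 'b) \<Rightarrow> bool" where
  "v_morphism V W h \<longleftrightarrow> l_morphism V W h \<and>
     (\<forall>g\<in>carrier V. \<forall>f. range f \<subseteq> carrier V \<longrightarrow> h (vsup V g f) = vsup W (h g) (h \<circ> f))"

definition U_obj :: "'a vsl \<Rightarrow> 'a lgrp" where
  "U_obj V = lgrp.truncate V"

definition sup_op :: "'a lgrp \<Rightarrow> 'a \<Rightarrow> (nat \<Rightarrow> 'a) \<Rightarrow> 'a" where
  "sup_op G g f = (THE s. is_lub G (range (\<lambda>n. meet G (f n) g)) s)"

definition F_obj :: "'a lgrp \<Rightarrow> 'a vsl" where
  "F_obj G = lgrp.extend G (vsl.fields (sup_op G))"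

end

theory Submission
  imports Defs
begin

text \<open>In an object of the variety, \<open>vsup V g f\<close> is the least upper bound of the family
  \<open>f n \<and> g\<close>, exactly as \<open>sup_op G g f\<close> is in a Dedekind \<sigma>-complete l-group: (A2) makes it
  an upper bound by induction, and (A1) followed by (A3) puts it below every upper bound \<open>w\<close>,
  since meeting the family with \<open>w\<close> does not change it. So \<open>vsup u f\<close> is the supremum of
  any \<open>f\<close> bounded by \<open>u\<close>, and everything else (the axioms for \<open>sup_op\<close>, preservation by
  morphisms, the composites of the functors) reduces to uniqueness of least upper bounds.\<close>

context
  fixes G :: "('a, 'm) lgrp_scheme"
  assumes lgroup: "lgroup G"
begin

lemma meet_closed: "a \<in> carrier G \<Longrightarrow> b \<in> carrier G \<Longrightarrow> meet G a b \<in> carrier G"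
  and join_closed: "a \<in> carrier G \<Longrightarrow> b \<in> carrier G \<Longrightarrow> join G a b \<in> carrier G"
  and join_commute: "a \<in> carrier G \<Longrightarrow> b \<in> carrier G \<Longrightarrow> join G a b = join G b a"
  and meet_commute: "a \<in> carrier G \<Longrightarrow> b \<in> carrier G \<Longrightarrow> meet G a b = meet G b a"
  and join_assoc: "a \<in> carrier G \<Longrightarrow> b \<in> carrier G \<Longrightarrow> c \<in> carrier G \<Longrightarrow>
    join G (join G a b) c = join G a (join G b c)"
  and meet_assoc: "a \<in> carrier G \<Longrightarrow> b \<in> carrier G \<Longrightarrow> c \<in> carrier G \<Longrightarrow>
    meet G (meet G a b) c = meet G a (meet G b c)"
  and join_meet_absorb: "a \<in> carrier G \<Longrightarrow> b \<in> carrier G \<Longrightarrow> join G a (meet G a b) = a"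
  and meet_join_absorb: "a \<in> carrier G \<Longrightarrow> b \<in> carrier G \<Longrightarrow> meet G a (join G a b) = a"
  using lgroup unfolding lgroup_def by blast+

lemma meet_idem: "a \<in> carrier G \<Longrightarrow> meet G a a = a"
  using meet_join_absorb[of a "meet G a a"] join_meet_absorb[of a a] meet_closed by simp

lemma lle_trans:
  "\<lbrakk>a \<in> carrier G; b \<in> carrier G; c \<in> carrier G; lle G a b; lle G b c\<rbrakk> \<Longrightarrow> lle G a c"
  unfolding lle_def by (metis meet_assoc)

lemma lle_antisym: "\<lbrakk>a \<in> carrier G; b \<in> carrier G; lle G a b; lle G b a\<rbrakk> \<Longrightarrow> a = b"
  unfolding lle_def by (metis meet_commute)

lemma lle_iff_join: "a \<in> carrier G \<Longrightarrow> b \<in> carrier G \<Longrightarrow> lle G a b \<longleftrightarrow> join G a b = b"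
  unfolding lle_def by (metis join_commute join_meet_absorb meet_commute meet_join_absorb)

lemma join_upper1: "a \<in> carrier G \<Longrightarrow> b \<in> carrier G \<Longrightarrow> lle G a (join G a b)"
  unfolding lle_def by (rule meet_join_absorb)

lemma join_upper2: "a \<in> carrier G \<Longrightarrow> b \<in> carrier G \<Longrightarrow> lle G b (join G a b)"
  using join_upper1[of b a] join_commute by simp

lemma join_least:
  "\<lbrakk>a \<in> carrier G; b \<in> carrier G; c \<in> carrier G; lle G a c; lle G b c\<rbrakk> \<Longrightarrow> lle G (join G a b) c"
  by (simp add: lle_iff_join join_closed join_assoc)

lemma meet_lower1: "a \<in> carrier G \<Longrightarrow> b \<in> carrier G \<Longrightarrow> lle G (meet G a b) a"
  unfolding lle_def by (metis meet_assoc meet_commute meet_idem)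

lemma meet_lower2: "a \<in> carrier G \<Longrightarrow> b \<in> carrier G \<Longrightarrow> lle G (meet G a b) b"
  using meet_lower1[of b a] meet_commute by simp

lemma is_lub_unique: "is_lub G A s \<Longrightarrow> is_lub G A t \<Longrightarrow> s = t"
  unfolding is_lub_def is_ub_def by (meson lle_antisym)

lemma is_ub_meet_family:
  "g \<in> carrier G \<Longrightarrow> range f \<subseteq> carrier G \<Longrightarrow> is_ub G (range (\<lambda>n. meet G (f n) g)) g"
  unfolding is_ub_def using meet_lower2 by auto

lemma is_lub_range_Suc:
  assumes f: "range f \<subseteq> carrier G" and t: "is_lub G (range (\<lambda>n. f (Suc n))) t"
  shows "is_lub G (range f) (join G (f 0) t)"
proof -
  have f0: "f 0 \<in> carrier G" and tc: "t \<in> carrier G" and jc: "join G (f 0) t \<in> carrier G"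
    using f t join_closed by (auto simp: is_lub_def is_ub_def)
  have "lle G (f n) (join G (f 0) t)" for n
  proof (cases n)
    case 0 then show ?thesis using join_upper1[OF f0 tc] by simp
  next
    case (Suc m)
    have "lle G (f (Suc m)) t" using t by (auto simp: is_lub_def is_ub_def)
    then show ?thesis using Suc f lle_trans[OF _ tc jc] join_upper2[OF f0 tc] by auto
  qed
  moreover have "lle G (join G (f 0) t) w" if w: "is_ub G (range f) w" for w
  proof -
    have "is_ub G (range (\<lambda>n. f (Suc n))) w" using w by (auto simp: is_ub_def)
    then have "lle G t w" using t by (simp add: is_lub_def)
    then show ?thesis using w join_least[OF f0 tc] by (simp add: is_ub_def)
  qed
  ultimately show ?thesis using jc by (simp add: is_lub_def is_ub_def)
qed

end

lemma is_lub_in_carrier: "is_lub G A s \<Longrightarrow> s \<in> carrier G"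
  by (simp add: is_lub_def is_ub_def)

lemma meet_with_upper_bound: "is_ub G (range f) u \<Longrightarrow> (\<lambda>n. meet G (f n) u) = f"
  by (auto simp: is_ub_def lle_def)

lemma l_morphism_comp_meet_family:
  assumes "l_morphism G H h" and "g \<in> carrier G" and "range f \<subseteq> carrier G"
  shows "h \<circ> (\<lambda>n. meet G (f n) g) = (\<lambda>n. meet H ((h \<circ> f) n) (h g))"
  using assms by (auto simp: l_morphism_def image_subset_iff)

lemma in_variety_lgroup: "in_variety V \<Longrightarrow> lgroup V"
  by (simp add: in_variety_def)

context
  fixes V :: "('a, 'm) vsl_scheme"
  assumes V: "in_variety V"
begin

lemma vsup_closed: "g \<in> carrier V \<Longrightarrow> range f \<subseteq> carrier V \<Longrightarrow> vsup V g f \<in> carrier V"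
  and vsup_meet_family: "g \<in> carrier V \<Longrightarrow> range f \<subseteq> carrier V \<Longrightarrow>
    vsup V g f = vsup V g (\<lambda>n. meet V (f n) g)"
  and vsup_unfold: "g \<in> carrier V \<Longrightarrow> range f \<subseteq> carrier V \<Longrightarrow>
    vsup V g f = join V (meet V (f 0) g) (vsup V g (\<lambda>n. f (Suc n)))"
  and vsup_meet_le: "g \<in> carrier V \<Longrightarrow> h \<in> carrier V \<Longrightarrow> range f \<subseteq> carrier V \<Longrightarrow>
    lle V (vsup V g (\<lambda>n. meet V (f n) h)) h"
  using V unfolding in_variety_def by blast+

lemma vsup_upper:
  assumes g: "g \<in> carrier V"
  shows "range f \<subseteq> carrier V \<Longrightarrow> lle V (meet V (f k) g) (vsup V g f)"
proof (induction k arbitrary: f)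
  case 0
  note L = in_variety_lgroup[OF V]
  have tail: "range (\<lambda>n. f (Suc n)) \<subseteq> carrier V" using 0 by auto
  have "meet V (f 0) g \<in> carrier V" using 0 g meet_closed[OF L] by auto
  then show ?case
    using vsup_unfold[OF g 0] join_upper1[OF L _ vsup_closed[OF g tail]] by simp
next
  case (Suc k)
  note L = in_variety_lgroup[OF V]
  have tail: "range (\<lambda>n. f (Suc n)) \<subseteq> carrier V" using Suc.prems by auto
  have fk: "meet V (f (Suc k)) g \<in> carrier V" and f0: "meet V (f 0) g \<in> carrier V"
    using Suc.prems g meet_closed[OF L] by auto
  have "lle V (meet V (f (Suc k)) g) (vsup V g (\<lambda>n. f (Suc n)))"
    using Suc.IH[OF tail] by simp
  moreover have "lle V (vsup V g (\<lambda>n. f (Suc n))) (vsup V g f)"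
    using vsup_unfold[OF g Suc.prems] join_upper2[OF L f0 vsup_closed[OF g tail]] by simp
  ultimately show ?case
    by (rule lle_trans[OF L fk vsup_closed[OF g tail] vsup_closed[OF g Suc.prems]])
qed

lemma vsup_is_lub:
  assumes g: "g \<in> carrier V" and f: "range f \<subseteq> carrier V"
  shows "is_lub V (range (\<lambda>n. meet V (f n) g)) (vsup V g f)"
proof -
  have "lle V (vsup V g f) w" if w: "is_ub V (range (\<lambda>n. meet V (f n) g)) w" for w
  proof -
    have "range (\<lambda>n. meet V (f n) g) \<subseteq> carrier V"
      using f g meet_closed[OF in_variety_lgroup[OF V]] by auto
    moreover have "w \<in> carrier V" using w by (simp add: is_ub_def)
    ultimately show ?thesis
      using vsup_meet_family[OF g f] vsup_meet_le[OF g] meet_with_upper_bound[OF w] by metis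
  qed
  then show ?thesis
    using vsup_upper[OF g f] vsup_closed[OF g f] by (auto simp: is_lub_def is_ub_def)
qed

lemma vsup_is_lub_bounded:
  assumes "range f \<subseteq> carrier V" and u: "is_ub V (range f) u"
  shows "is_lub V (range f) (vsup V u f)"
proof -
  have "u \<in> carrier V" using u by (simp add: is_ub_def)
  then show ?thesis using vsup_is_lub[OF _ assms(1)] meet_with_upper_bound[OF u] by metis
qed

end

lemma sigma_complete_lgroup: "sigma_complete G \<Longrightarrow> lgroup G"
  by (simp add: sigma_complete_def)

lemma sup_op_is_lub:
  assumes S: "sigma_complete G" and g: "g \<in> carrier G" and f: "range f \<subseteq> carrier G"
  shows "is_lub G (range (\<lambda>n. meet G (f n) g)) (sup_op G g f)"
proof -
  note L = sigma_complete_lgroup[OF S]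
  have "range (\<lambda>n. meet G (f n) g) \<subseteq> carrier G" using f g meet_closed[OF L] by auto
  then obtain s where s: "is_lub G (range (\<lambda>n. meet G (f n) g)) s"
    using S is_ub_meet_family[OF L g f] unfolding sigma_complete_def by blast
  then show ?thesis
    unfolding sup_op_def by (rule theI) (use s is_lub_unique[OF L] in blast)
qed

lemma F_obj_simps [simp]:
  "carrier (F_obj G) = carrier G" "zero (F_obj G) = zero G" "add (F_obj G) = add G"
  "neg (F_obj G) = neg G" "join (F_obj G) = join G" "meet (F_obj G) = meet G"
  "vsup (F_obj G) = sup_op G"
  by (simp_all add: F_obj_def lgrp.defs vsl.defs)

lemma U_obj_simps [simp]:
  "carrier (U_obj V) = carrier V" "zero (U_obj V) = zero V" "add (U_obj V) = add V"
  "neg (U_obj V) = neg V" "join (U_obj V) = join V" "meet (U_obj V) = meet V"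
  by (simp_all add: U_obj_def lgrp.defs vsl.defs)

lemma lgroup_F_obj [simp]: "lgroup (F_obj G) = lgroup G"
  and lgroup_U_obj [simp]: "lgroup (U_obj V) = lgroup V"
  and lle_F_obj [simp]: "lle (F_obj G) = lle G"
  and is_ub_U_obj [simp]: "is_ub (U_obj V) = is_ub V"
  and is_lub_U_obj [simp]: "is_lub (U_obj V) = is_lub V"
  and l_morphism_F_obj [simp]: "l_morphism (F_obj G) (F_obj H) = l_morphism G H"
  and l_morphism_U_obj [simp]: "l_morphism (U_obj V) (U_obj W) = l_morphism V W"
  by (simp_all add: lgroup_def lle_def[abs_def] is_lub_def[abs_def] is_ub_def[abs_def]
      l_morphism_def[abs_def])

theorem in_variety_sigma_complete:
  assumes V: "in_variety V"
  shows "sigma_complete (U_obj V)"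
  unfolding sigma_complete_def using in_variety_lgroup[OF V] vsup_is_lub_bounded[OF V] by auto

theorem sigma_complete_in_variety_F_obj:
  assumes S: "sigma_complete G"
  shows "in_variety (F_obj G)"
proof -
  note L = sigma_complete_lgroup[OF S]
  note lub = sup_op_is_lub[OF S]
  have closed: "sup_op G g f \<in> carrier G" if "g \<in> carrier G" "range f \<subseteq> carrier G" for g f
    using lub[OF that] by (rule is_lub_in_carrier)
  have A1: "sup_op G g f = sup_op G g (\<lambda>n. meet G (f n) g)"
    if "g \<in> carrier G" "range f \<subseteq> carrier G" for g f
  proof -
    have "(\<lambda>n. meet G (meet G (f n) g) g) = (\<lambda>n. meet G (f n) g)"
      using that meet_assoc[OF L] meet_idem[OF L] by (auto simp: image_subset_iff)
    then show ?thesis unfolding sup_op_def by (simp only:)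
  qed
  have A2: "sup_op G g f = join G (meet G (f 0) g) (sup_op G g (\<lambda>n. f (Suc n)))"
    if g: "g \<in> carrier G" and f: "range f \<subseteq> carrier G" for g f
  proof -
    have r: "range (\<lambda>n. meet G (f n) g) \<subseteq> carrier G" using f g meet_closed[OF L] by auto
    have "range (\<lambda>n. f (Suc n)) \<subseteq> carrier G" using f by auto
    then have "is_lub G (range (\<lambda>n. meet G (f (Suc n)) g)) (sup_op G g (\<lambda>n. f (Suc n)))"
      using lub[OF g] by simp
    then have "is_lub G (range (\<lambda>n. meet G (f n) g))
        (join G (meet G (f 0) g) (sup_op G g (\<lambda>n. f (Suc n))))"
      using is_lub_range_Suc[OF L r] by simp
    then show ?thesis using lub[OF g f] is_lub_unique[OF L] by blast
  qed
  have A3: "lle G (sup_op G g (\<lambda>n. meet G (f n) h)) h"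
    if g: "g \<in> carrier G" and h: "h \<in> carrier G" and f: "range f \<subseteq> carrier G" for g h f
  proof -
    have "lle G (meet G (meet G (f n) h) g) h" for n
      using f g h lle_trans[OF L _ _ h meet_lower1[OF L] meet_lower2[OF L]] meet_closed[OF L]
      by auto
    moreover have "range (\<lambda>n. meet G (f n) h) \<subseteq> carrier G" using f h meet_closed[OF L] by auto
    ultimately show ?thesis using lub[OF g] h by (auto simp: is_lub_def is_ub_def)
  qed
  show ?thesis
    unfolding in_variety_def F_obj_simps lgroup_F_obj lle_F_obj
    by (intro conjI ballI allI impI L closed A1 A2 A3)
qed

theorem v_morphism_sigma_continuous:
  assumes V: "in_variety V" and W: "in_variety W" and h: "v_morphism V W h"
  shows "sigma_continuous (U_obj V) (U_obj W) h"
proof -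
  have lm: "l_morphism V W h" using h by (simp add: v_morphism_def)
  have "is_lub W (range (h \<circ> f)) (h s)" if f: "range f \<subseteq> carrier V" and s: "is_lub V (range f) s"
    for f :: "nat \<Rightarrow> _" and s
  proof -
    have sc: "s \<in> carrier V" using s by (rule is_lub_in_carrier)
    have ub: "is_ub V (range f) s" using s by (simp add: is_lub_def)
    have "vsup V s f = s"
      using is_lub_unique[OF in_variety_lgroup[OF V] vsup_is_lub_bounded[OF V f ub] s] .
    moreover have "h (vsup V s f) = vsup W (h s) (h \<circ> f)"
      using h sc f unfolding v_morphism_def by blast
    ultimately have "vsup W (h s) (h \<circ> f) = h s" by simp
    moreover have "is_lub W (range (h \<circ> f)) (vsup W (h s) (h \<circ> f))"
    proof -
      have "(\<lambda>n. meet W ((h \<circ> f) n) (h s)) = h \<circ> f"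
        using l_morphism_comp_meet_family[OF lm sc f] unfolding meet_with_upper_bound[OF ub]
        by (rule sym)
      moreover have "h s \<in> carrier W" "range (h \<circ> f) \<subseteq> carrier W"
        using lm sc f by (auto simp: l_morphism_def)
      ultimately show ?thesis using vsup_is_lub[OF W] by metis
    qed
    ultimately show ?thesis by simp
  qed
  then show ?thesis by (simp add: sigma_continuous_def lm)
qed

theorem sigma_continuous_v_morphism_F_obj:
  assumes SG: "sigma_complete G" and SH: "sigma_complete H" and h: "sigma_continuous G H h"
  shows "v_morphism (F_obj G) (F_obj H) h"
proof -
  have lm: "l_morphism G H h" using h by (simp add: sigma_continuous_def)
  have "h (sup_op G g f) = sup_op H (h g) (h \<circ> f)"
    if g: "g \<in> carrier G" and f: "range f \<subseteq> carrier G" for g f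
  proof -
    have "range (\<lambda>n. meet G (f n) g) \<subseteq> carrier G"
      using f g meet_closed[OF sigma_complete_lgroup[OF SG]] by auto
    then have "is_lub H (range (h \<circ> (\<lambda>n. meet G (f n) g))) (h (sup_op G g f))"
      using h sup_op_is_lub[OF SG g f] unfolding sigma_continuous_def by blast
    then have "is_lub H (range (\<lambda>n. meet H ((h \<circ> f) n) (h g))) (h (sup_op G g f))"
      by (simp only: l_morphism_comp_meet_family[OF lm g f])
    moreover have "range (h \<circ> f) \<subseteq> carrier H" "h g \<in> carrier H"
      using f g lm by (auto simp: l_morphism_def)
    ultimately show ?thesis
      using sup_op_is_lub[OF SH] is_lub_unique[OF sigma_complete_lgroup[OF SH]] by blast
  qed
  then show ?thesis by (simp add: v_morphism_def lm)
qed

lemma U_obj_F_obj: "U_obj (F_obj G) = G"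
  by (simp add: U_obj_def F_obj_def lgrp.defs vsl.defs)

lemma truncate_F_obj_U_obj: "lgrp.truncate (F_obj (U_obj V)) = lgrp.truncate V"
  by (simp add: U_obj_def F_obj_def lgrp.defs vsl.defs)

lemma vsup_F_obj_U_obj:
  assumes V: "in_variety V" and g: "g \<in> carrier V" and f: "range f \<subseteq> carrier V"
  shows "vsup (F_obj (U_obj V)) g f = vsup V g f"
  using sup_op_is_lub[OF in_variety_sigma_complete[OF V], of g f] vsup_is_lub[OF V g f]
    is_lub_unique[OF in_variety_lgroup[OF V]] g f by simp

theorem mainTheorem1:
  shows
    "(\<forall>V :: 'a vsl. in_variety V \<longrightarrow> sigma_complete (U_obj V)) \<and>
     (\<forall>(V :: 'a vsl) (W :: 'b vsl) h. in_variety V \<and> in_variety W \<and> v_morphism V W h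
        \<longrightarrow> sigma_continuous (U_obj V) (U_obj W) h) \<and>
     (\<forall>G :: 'a lgrp. sigma_complete G \<longrightarrow> in_variety (F_obj G)) \<and>
     (\<forall>(G :: 'a lgrp) (H :: 'b lgrp) h. sigma_complete G \<and> sigma_complete H \<and> sigma_continuous G H h
        \<longrightarrow> v_morphism (F_obj G) (F_obj H) h) \<and>
     (\<forall>G :: 'a lgrp. sigma_complete G \<longrightarrow> U_obj (F_obj G) = G) \<and>
     (\<forall>V :: 'a vsl. in_variety V \<longrightarrow>
        (\<forall>g\<in>carrier V. \<forall>f. range f \<subseteq> carrier V \<longrightarrow> vsup (F_obj (U_obj V)) g f = vsup V g f) \<and>
        lgrp.truncate (F_obj (U_obj V)) = lgrp.truncate V)"
proof (intro conjI allI impI ballI)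
  fix V :: "'a vsl" and W :: "'b vsl" and G :: "'a lgrp" and H :: "'b lgrp" and h g f
  show "in_variety V \<Longrightarrow> sigma_complete (U_obj V)"
    by (rule in_variety_sigma_complete)
  show "in_variety V \<and> in_variety W \<and> v_morphism V W h \<Longrightarrow> sigma_continuous (U_obj V) (U_obj W) h"
    using v_morphism_sigma_continuous by blast
  show "sigma_complete G \<Longrightarrow> in_variety (F_obj G)"
    by (rule sigma_complete_in_variety_F_obj)
  show "sigma_complete G \<and> sigma_complete H \<and> sigma_continuous G H h \<Longrightarrow>
      v_morphism (F_obj G) (F_obj H) h"
    using sigma_continuous_v_morphism_F_obj by blast
  show "U_obj (F_obj G) = G"
    by (rule U_obj_F_obj)
  show "in_variety V \<Longrightarrow> g \<in> carrier V \<Longrightarrow> range f \<subseteq> carrier V \<Longrightarrow>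
      vsup (F_obj (U_obj V)) g f = vsup V g f"
    by (rule vsup_F_obj_U_obj)
  show "lgrp.truncate (F_obj (U_obj V)) = lgrp.truncate V"
    by (rule truncate_F_obj_U_obj)
qed

end
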